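(* Let $\mathcal{H}$ be a real Hilbert space. For each $i=1,2,\ldots,N$, let $f_i:\mathcal{H}\to\mathcal{H}$ be $\alpha_i$-inverse strongly monotone ($\alpha_i>0$) and let $C_i\subset\mathcal{H}$ be nonempty, closed and convex, with $\bigcap_{i=1}^N C_i\neq\emptyset$. Let $\Psi:=\bigcap_{i=1}^N SOL(C_i,f_i)$ and assume $\Psi\neq\emptyset$. Set $\alpha:=\min_i\alpha_i$ and take $\lambda\in(0,2\alpha)$. Let $T_i:=P_{C_i}(I-\lambda f_i)$, i.e. $T_i(x)=P_{C_i}(x-\lambda f_i(x))$. Given an arbitrary $x^0\in\mathcal{H}$, define $x^{k+1}=(T_1\circ T_2\circ\cdots\circ T_N)(x^k)$ for $k\ge 0$. Then $\{x^k\}_{k=0}^\infty$ converges weakly to a point $x^\ast\in\Psi$, and moreover $x^\ast=\lim_{k\to\infty}P_\Psi(x^k)$ (strong limit).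
   Context: An operator $h:\mathcal{H}\to\mathcal{H}$ is $\beta$-inverse strongly monotone ($\beta>0$) if $\langle h(x)-h(y),x-y\rangle\geq\beta\|h(x)-h(y)\|^2$ for all $x,y\in\mathcal{H}$. For a nonempty closed convex set $D\subset\mathcal{H}$, $P_D$ denotes the metric (nearest point) projection onto $D$. For such $D$ and an operator $h$, $SOL(D,h)$ denotes the set of $x^\ast\in D$ with $\langle h(x^\ast),x-x^\ast\rangle\geq 0$ for all $x\in D$. The set $\Psi$ is closed and convex. *)

theory Defs
  imports "HOL-Analysis.Analysis"
begin

definition inv_strongly_monotone :: "real \<Rightarrow> ('a::real_inner \<Rightarrow> 'a) \<Rightarrow> bool" where
  "inv_strongly_monotone \<beta> h \<longleftrightarrow> \<beta> > 0 \<and>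
     (\<forall>x y. inner (h x - h y) (x - y) \<ge> \<beta> * (norm (h x - h y))\<^sup>2)"

definition metric_proj :: "'a::real_inner set \<Rightarrow> 'a \<Rightarrow> 'a" where
  "metric_proj D x = (SOME p. p \<in> D \<and> (\<forall>y\<in>D. norm (x - p) \<le> norm (x - y)))"

definition SOL :: "'a::real_inner set \<Rightarrow> ('a \<Rightarrow> 'a) \<Rightarrow> 'a set" where
  "SOL D h = {xs \<in> D. \<forall>x\<in>D. inner (h xs) (x - xs) \<ge> 0}"

definition weakly_converges_to :: "(nat \<Rightarrow> 'a::real_inner) \<Rightarrow> 'a \<Rightarrow> bool" where
  "weakly_converges_to x l \<longleftrightarrow> (\<forall>y. (\<lambda>k. inner (x k) y) \<longlonglongrightarrow> inner l y)"

text \<open>compose_upto T n = T 1 \<circ> T 2 \<circ> ... \<circ> T n\<close>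
fun compose_upto :: "(nat \<Rightarrow> 'a \<Rightarrow> 'a) \<Rightarrow> nat \<Rightarrow> 'a \<Rightarrow> 'a" where
  "compose_upto T 0 = id"
| "compose_upto T (Suc n) = compose_upto T n \<circ> T (Suc n)"

end

theory Submission
  imports Defs "HOL-Library.Diagonal_Subsequence"
begin

text \<open>
  Each operator \<open>T\<^sub>i = P\<^bsub>C\<^sub>i\<^esub> (I - lam f\<^sub>i)\<close> is nonexpansive and, since
  \<open>lam < 2 \<alpha>\<^sub>i\<close>, strongly quasi-nonexpansive with respect to its fixed point set
  \<open>SOL(C\<^sub>i, f\<^sub>i)\<close>: \<open>\<parallel>T y - z\<parallel>\<^sup>2 \<le> \<parallel>y - z\<parallel>\<^sup>2 - \<epsilon> \<parallel>T y - y\<parallel>\<^sup>2\<close>.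
  Both properties survive composition, and as long as the sets \<open>SOL(C\<^sub>i, f\<^sub>i)\<close> have a
  common point, the fixed points of the composite map \<open>T\<close> are exactly \<open>\<Psi>\<close>.
  Hence the iterates are Fejer monotone with respect to \<open>\<Psi>\<close> and asymptotically regular
  (\<open>T x\<^sup>k - x\<^sup>k \<rightarrow> 0\<close>). Fejer monotonicity makes \<open>P\<^sub>\<Psi> x\<^sup>k\<close> a Cauchy sequence with
  some limit \<open>p\<close>. By demiclosedness of \<open>I - T\<close> every weak cluster point \<open>q\<close> of
  \<open>(x\<^sup>k)\<close> lies in \<open>\<Psi>\<close>, and the variational inequality of \<open>P\<^sub>\<Psi>\<close> passes to the limit as
  \<open>\<langle>q - p, q - p\<rangle> \<le> 0\<close>, so \<open>q = p\<close>. Weak sequential compactness of bounded sequences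
  (a diagonal argument plus the Riesz representation theorem) then yields weak convergence
  of the whole sequence to \<open>p\<close>.
\<close>


lemma norm_add_sq: "(norm (a + b))\<^sup>2 = (norm a)\<^sup>2 + 2 * inner a b + (norm b)\<^sup>2"
  for a b :: "'a::real_inner"
  by (simp add: power2_norm_eq_inner inner_add_left inner_add_right inner_commute)

lemma norm_diff_sq: "(norm (a - b))\<^sup>2 = (norm a)\<^sup>2 - 2 * inner a b + (norm b)\<^sup>2"
  for a b :: "'a::real_inner"
  by (simp add: power2_norm_eq_inner inner_diff_left inner_diff_right inner_commute)

lemma norm_add_sq_le: "(norm (a + b))\<^sup>2 \<le> 2 * (norm a)\<^sup>2 + 2 * (norm b)\<^sup>2"
  for a b :: "'a::real_inner"
  using norm_diff_sq[of a b] norm_add_sq[of a b] by (smt (verit) zero_le_power2)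

lemma convex_combination_norm_sq:
  fixes g z1 z2 :: "'a::real_inner"
  assumes "a + b = 1"
  shows "a * (norm (g - z1))\<^sup>2 + b * (norm (g - z2))\<^sup>2
         = (norm (g - (a *\<^sub>R z1 + b *\<^sub>R z2)))\<^sup>2 + a * b * (norm (z1 - z2))\<^sup>2"
proof -
  have b: "b = 1 - a" using assms by simp
  show ?thesis unfolding b
    by (simp add: power2_norm_eq_inner inner_diff_left inner_diff_right inner_commute algebra_simps)
qed

lemma Cauchy_if_dist_sq_le:
  fixes y :: "nat \<Rightarrow> 'a::metric_space"
  assumes le: "\<And>m n. (dist (y m) (y n))\<^sup>2 \<le> g m + g n" and g: "g \<longlonglongrightarrow> 0"
  shows "Cauchy y"
proof (rule metric_CauchyI)
  fix e :: real assume "e > 0"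
  then have "e\<^sup>2 / 2 > 0" by simp
  then obtain M where "\<forall>n\<ge>M. norm (g n - 0) < e\<^sup>2 / 2" using LIMSEQ_D[OF g] by blast
  then have M: "\<And>n. n \<ge> M \<Longrightarrow> \<bar>g n\<bar> < e\<^sup>2 / 2" by simp
  have "dist (y m) (y n) < e" if "m \<ge> M" "n \<ge> M" for m n
  proof -
    have "(dist (y m) (y n))\<^sup>2 < e\<^sup>2" using le[of m n] M[OF that(1)] M[OF that(2)] by linarith
    then show ?thesis using \<open>e > 0\<close> by (simp add: power_less_imp_less_base)
  qed
  then show "\<exists>M. \<forall>m\<ge>M. \<forall>n\<ge>M. dist (y m) (y n) < e" by blast
qed

section \<open>Metric projections\<close>

lemma convex_minimizing_sequence_Cauchy:
  fixes y :: "nat \<Rightarrow> 'a::real_inner"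
  assumes "convex D" and yD: "\<And>n. y n \<in> D" and d: "0 \<le> d" "\<And>a. a \<in> D \<Longrightarrow> d \<le> norm (x - a)"
    and yd: "\<And>n. norm (x - y n) \<le> d + e n" and e: "e \<longlonglongrightarrow> 0"
  shows "Cauchy y"
proof (rule Cauchy_if_dist_sq_le)
  define h where "h n = 2 * ((d + e n)\<^sup>2 - d\<^sup>2)" for n
  show "(dist (y m) (y n))\<^sup>2 \<le> h m + h n" for m n
  proof -
    have "(1/2) *\<^sub>R y m + (1/2) *\<^sub>R y n \<in> D" using yD \<open>convex D\<close> by (simp add: convexD)
    then have "d\<^sup>2 \<le> (norm (x - ((1/2) *\<^sub>R y m + (1/2) *\<^sub>R y n)))\<^sup>2"
      using d by (simp add: power_mono)
    moreover have "(norm (x - y m))\<^sup>2 \<le> (d + e m)\<^sup>2" "(norm (x - y n))\<^sup>2 \<le> (d + e n)\<^sup>2"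
      using yd[of m] yd[of n] by (simp_all add: power_mono)
    moreover have "(norm (y m - y n))\<^sup>2 = 2 * (norm (x - y m))\<^sup>2 + 2 * (norm (x - y n))\<^sup>2
        - 4 * (norm (x - ((1/2) *\<^sub>R y m + (1/2) *\<^sub>R y n)))\<^sup>2"
      using convex_combination_norm_sq[of "1/2" "1/2" x "y m" "y n", OF field_sum_of_halves]
      by linarith
    ultimately show ?thesis unfolding h_def dist_norm by argo
  qed
  have "h \<longlonglongrightarrow> 2 * ((d + 0)\<^sup>2 - d\<^sup>2)" unfolding h_def by (intro tendsto_intros e)
  then show "h \<longlonglongrightarrow> 0" by simp
qed

lemma nearest_point_exists:
  fixes D :: "'a::{real_inner,complete_space} set"
  assumes ne: "D \<noteq> {}" and "closed D" "convex D"
  shows "\<exists>p\<in>D. \<forall>y\<in>D. norm (x - p) \<le> norm (x - y)"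
proof -
  define d where "d = infdist x D"
  define e where "e n = inverse (real (Suc n))" for n
  have e: "e \<longlonglongrightarrow> 0" unfolding e_def by (rule LIMSEQ_inverse_real_of_nat)
  have "d \<le> norm (x - a)" if "a \<in> D" for a
    using infdist_le[OF that, of x] by (simp add: d_def dist_norm)
  then have d: "0 \<le> d" "\<And>a. a \<in> D \<Longrightarrow> d \<le> norm (x - a)"
    by (simp_all add: d_def infdist_nonneg)
  have "\<exists>y\<in>D. norm (x - y) < d + e n" for n
  proof -
    have "(INF a\<in>D. dist x a) < d + e n" using infdist_notempty[OF ne] by (simp add: d_def e_def)
    then obtain t where "t \<in> (\<lambda>a. dist x a) ` D" "t < d + e n"
      using ne by (meson cInf_lessD image_is_empty)
    then show ?thesis by (auto simp: dist_norm)
  qed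
  then obtain y where yD: "\<And>n. y n \<in> D" and yd: "\<And>n. norm (x - y n) < d + e n" by metis
  have "Cauchy y"
    by (rule convex_minimizing_sequence_Cauchy[OF \<open>convex D\<close> yD d less_imp_le[OF yd] e])
  then obtain p where yp: "y \<longlonglongrightarrow> p" using Cauchy_convergent_iff convergent_def by blast
  have "p \<in> D" using \<open>closed D\<close> yD yp closed_sequential_limits by blast
  moreover have "norm (x - p) \<le> d"
  proof (rule LIMSEQ_le)
    show "(\<lambda>n. norm (x - y n)) \<longlonglongrightarrow> norm (x - p)" by (intro tendsto_intros yp)
    show "(\<lambda>n. d + e n) \<longlonglongrightarrow> d" using tendsto_add[OF tendsto_const e, of d] by simp
  qed (use yd less_imp_le in auto)
  ultimately show ?thesis using d order_trans by blast
qed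

lemma metric_proj:
  fixes D :: "'a::{real_inner,complete_space} set"
  assumes "D \<noteq> {}" "closed D" "convex D"
  shows metric_proj_in: "metric_proj D x \<in> D"
    and metric_proj_le: "y \<in> D \<Longrightarrow> norm (x - metric_proj D x) \<le> norm (x - y)"
proof -
  have "metric_proj D x \<in> D \<and> (\<forall>y\<in>D. norm (x - metric_proj D x) \<le> norm (x - y))"
    unfolding metric_proj_def by (rule someI_ex) (use nearest_point_exists[OF assms] in blast)
  then show "metric_proj D x \<in> D" "y \<in> D \<Longrightarrow> norm (x - metric_proj D x) \<le> norm (x - y)"
    by auto
qed

lemma nearest_point_variational:
  fixes D :: "'a::real_inner set"
  assumes "convex D" and pD: "p \<in> D" and nearest: "\<And>y. y \<in> D \<Longrightarrow> norm (x - p) \<le> norm (x - y)"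
    and yD: "y \<in> D"
  shows "inner (x - p) (y - p) \<le> 0"
proof (rule ccontr)
  define a where "a = inner (x - p) (y - p)"
  define b where "b = (norm (y - p))\<^sup>2"
  assume "\<not> inner (x - p) (y - p) \<le> 0"
  then have a: "a > 0" unfolding a_def by simp
  have b: "b \<ge> 0" unfolding b_def by simp
  define t where "t = min 1 (a / (b + 1))"
  have t: "0 < t" "t \<le> 1" using a b unfolding t_def by auto
  have "p + t *\<^sub>R (y - p) = (1 - t) *\<^sub>R p + t *\<^sub>R y" by (simp add: algebra_simps)
  also have "\<dots> \<in> D" using \<open>convex D\<close> pD yD t by (simp add: convexD)
  finally have "norm (x - p) \<le> norm (x - (p + t *\<^sub>R (y - p)))" by (rule nearest)
  also have "x - (p + t *\<^sub>R (y - p)) = (x - p) - t *\<^sub>R (y - p)" by (simp add: algebra_simps)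
  finally have "norm (x - p) \<le> norm ((x - p) - t *\<^sub>R (y - p))" .
  then have "(norm (x - p))\<^sup>2 \<le> (norm ((x - p) - t *\<^sub>R (y - p)))\<^sup>2"
    by (simp add: power_mono)
  also have "\<dots> = (norm (x - p))\<^sup>2 - 2 * t * a + t\<^sup>2 * b"
    by (simp add: norm_diff_sq a_def b_def power_mult_distrib)
  finally have "2 * a \<le> t * b" using t by (simp add: power2_eq_square)
  moreover have "t * b \<le> a / (b + 1) * b" using b unfolding t_def by (intro mult_right_mono) auto
  moreover have "a / (b + 1) * b < a" using a b by (simp add: field_simps)
  ultimately show False using a by linarith
qed

lemma metric_proj_variational:
  fixes D :: "'a::{real_inner,complete_space} set"
  assumes "D \<noteq> {}" "closed D" "convex D" "y \<in> D"
  shows "inner (x - metric_proj D x) (y - metric_proj D x) \<le> 0"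
  using nearest_point_variational metric_proj[OF assms(1-3)] assms by blast

lemma metric_proj_eqI:
  fixes D :: "'a::{real_inner,complete_space} set"
  assumes D: "D \<noteq> {}" "closed D" "convex D" and "p \<in> D"
    and vi: "\<And>y. y \<in> D \<Longrightarrow> inner (x - p) (y - p) \<le> 0"
  shows "metric_proj D x = p"
proof -
  let ?q = "metric_proj D x"
  have "inner (x - p) (?q - p) \<le> 0" by (rule vi[OF metric_proj_in[OF D]])
  moreover have "inner (x - ?q) (p - ?q) \<le> 0" by (rule metric_proj_variational[OF D \<open>p \<in> D\<close>])
  moreover have "inner (x - p) (?q - p) + inner (x - ?q) (p - ?q) = inner (?q - p) (?q - p)"
    by (simp add: inner_diff_left inner_diff_right inner_commute)
  ultimately have "inner (?q - p) (?q - p) \<le> 0" by linarith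
  then show ?thesis by (metis antisym inner_ge_zero inner_eq_zero_iff right_minus_eq)
qed

lemma metric_proj_firmly_nonexpansive:
  fixes D :: "'a::{real_inner,complete_space} set"
  assumes D: "D \<noteq> {}" "closed D" "convex D"
  shows "(norm (metric_proj D a - metric_proj D b))\<^sup>2
           + (norm ((a - metric_proj D a) - (b - metric_proj D b)))\<^sup>2 \<le> (norm (a - b))\<^sup>2"
proof -
  define pa where "pa = metric_proj D a"
  define pb where "pb = metric_proj D b"
  have "inner (a - pa) (pb - pa) \<le> 0" "inner (b - pb) (pa - pb) \<le> 0"
    unfolding pa_def pb_def by (intro metric_proj_variational[OF D metric_proj_in[OF D]])+
  moreover have "inner (a - pa) (pb - pa) + inner (b - pb) (pa - pb)
      = - inner (pa - pb) ((a - pa) - (b - pb))"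
    by (simp add: inner_diff_left inner_diff_right inner_commute)
  moreover have "(norm (a - b))\<^sup>2 = (norm (pa - pb))\<^sup>2 + 2 * inner (pa - pb) ((a - pa) - (b - pb))
      + (norm ((a - pa) - (b - pb)))\<^sup>2"
    using norm_add_sq[of "pa - pb" "(a - pa) - (b - pb)"] by simp
  ultimately show ?thesis unfolding pa_def pb_def by linarith
qed

lemma subspace_closure:
  fixes S :: "'a::real_normed_vector set"
  assumes "subspace S"
  shows "subspace (closure S)"
  unfolding subspace_def
proof (intro conjI ballI allI)
  show "0 \<in> closure S" using assms closure_subset subspace_0 by blast
next
  fix a b assume "a \<in> closure S" "b \<in> closure S"
  then obtain u v where "\<forall>n. u n \<in> S" "u \<longlonglongrightarrow> a" "\<forall>n. v n \<in> S" "v \<longlonglongrightarrow> b"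
    by (meson closure_sequential)
  then have "\<forall>n. u n + v n \<in> S" "(\<lambda>n. u n + v n) \<longlonglongrightarrow> a + b"
    by (simp_all add: subspace_add[OF assms] tendsto_add)
  then show "a + b \<in> closure S"
    unfolding closure_sequential by (intro exI[of _ "\<lambda>n. u n + v n"]) simp
next
  fix c a assume "a \<in> closure S"
  then obtain u where "\<forall>n. u n \<in> S" "u \<longlonglongrightarrow> a" by (meson closure_sequential)
  then have "\<forall>n. c *\<^sub>R u n \<in> S" "(\<lambda>n. c *\<^sub>R u n) \<longlonglongrightarrow> c *\<^sub>R a"
    by (simp_all add: subspace_scale[OF assms] tendsto_scaleR)
  then show "c *\<^sub>R a \<in> closure S"
    unfolding closure_sequential by (intro exI[of _ "\<lambda>n. c *\<^sub>R u n"]) simp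
qed

lemma metric_proj_subspace_orthogonal:
  fixes M :: "'a::{real_inner,complete_space} set"
  assumes "subspace M" "closed M" "m \<in> M"
  shows "inner (x - metric_proj M x) m = 0"
proof -
  have M: "M \<noteq> {}" "closed M" "convex M"
    using assms subspace_0 subspace_imp_convex by auto
  let ?p = "metric_proj M x"
  have "?p + m \<in> M" "?p - m \<in> M"
    using metric_proj_in[OF M] assms by (simp_all add: subspace_add subspace_diff)
  from this[THEN metric_proj_variational[OF M, where x = x]] show ?thesis by simp
qed

lemma riesz_representation:
  fixes L :: "'a::{real_inner,complete_space} \<Rightarrow> real"
  assumes L: "bounded_linear L"
  shows "\<exists>q. \<forall>v. L v = inner q v"
proof (cases "\<forall>v. L v = 0")
  case True then show ?thesis by (intro exI[of _ 0]) simp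
next
  case False
  then obtain w where w: "L w \<noteq> 0" by blast
  define K where "K = {v. L v = 0}"
  have "linear L" using L bounded_linear.linear by blast
  then have K: "subspace K" "closed K"
    unfolding K_def using L
    by (auto intro!: closed_Collect_eq linear_continuous_on continuous_on_const
        simp: linear_subspace_kernel)
  define z where "z = w - metric_proj K w"
  have "metric_proj K w \<in> K" using K subspace_0 subspace_imp_convex by (auto intro: metric_proj_in)
  then have Lz: "L z = L w" using \<open>linear L\<close> unfolding z_def K_def by (simp add: linear_diff)
  show ?thesis
  proof (intro exI allI)
    fix v
    have "v - (L v / L z) *\<^sub>R z \<in> K" using w Lz \<open>linear L\<close> unfolding K_def
      by (simp add: linear_diff linear_scale)
    then have "inner z (v - (L v / L z) *\<^sub>R z) = 0"
      using metric_proj_subspace_orthogonal[OF K] unfolding z_def by blast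
    then have "inner z v = (L v / L z) * inner z z" by (simp add: inner_diff_right)
    moreover have "inner z z \<noteq> 0" using Lz w \<open>linear L\<close> by (auto simp: linear_0)
    ultimately show "L v = inner ((L z / inner z z) *\<^sub>R z) v" using w Lz by (simp add: field_simps)
  qed
qed

section \<open>Weak sequential compactness\<close>

lemma abs_inner_le_bound:
  fixes a v :: "'a::real_inner"
  assumes "norm a \<le> B"
  shows "\<bar>inner a v\<bar> \<le> B * norm v"
  using Cauchy_Schwarz_ineq2[of a v] mult_right_mono[OF assms norm_ge_zero[of v]] by linarith

lemma bounded_inner_null:
  fixes a b :: "nat \<Rightarrow> 'a::real_inner"
  assumes "\<And>j. norm (a j) \<le> B" and "b \<longlonglongrightarrow> 0"
  shows "(\<lambda>j. inner (a j) (b j)) \<longlonglongrightarrow> 0"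
proof (rule Lim_null_comparison)
  show "\<forall>\<^sub>F j in sequentially. norm (inner (a j) (b j)) \<le> B * norm (b j)"
    using abs_inner_le_bound[OF assms(1)] by (intro always_eventually allI) simp
  show "(\<lambda>j. B * norm (b j)) \<longlonglongrightarrow> 0"
    using tendsto_mult_right_zero[OF tendsto_norm_zero[OF assms(2)]] by simp
qed

lemma weakly_converges_to_inner_tendsto:
  fixes u :: "nat \<Rightarrow> 'a::real_inner"
  assumes "weakly_converges_to u q" "\<And>j. norm (u j) \<le> B" "w \<longlonglongrightarrow> l"
  shows "(\<lambda>j. inner (u j) (w j)) \<longlonglongrightarrow> inner q l"
proof -
  have "(\<lambda>j. inner (u j) l + inner (u j) (w j - l)) \<longlonglongrightarrow> inner q l + 0"
    using assms LIM_zero[OF assms(3)] unfolding weakly_converges_to_def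
    by (intro tendsto_add bounded_inner_null) auto
  then show ?thesis by (simp add: inner_diff_right)
qed

lemma inner_convergent_diagonal_subseq:
  fixes u :: "nat \<Rightarrow> 'a::real_inner"
  assumes bnd: "\<And>n. norm (u n) \<le> B"
  shows "\<exists>d. strict_mono d \<and> (\<forall>n. convergent (\<lambda>k. inner (u (d k)) (u n)))"
proof -
  let ?P = "\<lambda>n s. convergent (\<lambda>k. inner (u (s k)) (u n))"
  interpret subseqs ?P
  proof
    fix n :: nat and s :: "nat \<Rightarrow> nat"
    have "bounded (range (\<lambda>k. inner (u (s k)) (u n)))"
      using abs_inner_le_bound[OF bnd] by (intro boundedI[where B = "B * norm (u n)"]) auto
    then obtain r l where "strict_mono r" "((\<lambda>k. inner (u (s k)) (u n)) \<circ> r) \<longlonglongrightarrow> l"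
      using bounded_imp_convergent_subsequence by blast
    then show "\<exists>r. strict_mono r \<and> ?P n (s \<circ> r)" by (auto simp: comp_def convergent_def)
  qed
  have "?P n diagseq" for n
  proof -
    have "convergent ((\<lambda>k. inner (u (seqseq (Suc n) k)) (u n))
        \<circ> (\<lambda>k. fold_reduce (Suc n) k (Suc n + k)))"
      by (rule convergent_subseq_convergent[OF seqseq_holds subseq_diagonal_rest])
    then have "?P n (diagseq \<circ> (+) (Suc n))" unfolding diagseq_seqseq by (simp add: comp_def)
    then obtain l where "(\<lambda>k. inner (u (diagseq (k + Suc n))) (u n)) \<longlonglongrightarrow> l"
      by (auto simp: convergent_def add.commute)
    then have "(\<lambda>k. inner (u (diagseq k)) (u n)) \<longlonglongrightarrow> l" by (rule LIMSEQ_offset)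
    then show ?thesis by (rule convergentI)
  qed
  then show ?thesis using subseq_diagseq by blast
qed

lemma inner_convergent_span:
  fixes w :: "nat \<Rightarrow> 'a::real_inner"
  assumes "\<And>s. s \<in> S \<Longrightarrow> convergent (\<lambda>k. inner (w k) s)" and "v \<in> span S"
  shows "convergent (\<lambda>k. inner (w k) v)"
proof -
  have "subspace {v. convergent (\<lambda>k. inner (w k) v)}"
    unfolding subspace_def
    by (auto simp: inner_add_right intro: convergent_const convergent_add convergent_mult)
  then show ?thesis using span_induct[OF assms(2)] assms(1) by blast
qed

lemma inner_convergent_closure:
  fixes w :: "nat \<Rightarrow> 'a::real_inner"
  assumes bnd: "\<And>k. norm (w k) \<le> B" and cnv: "\<And>s. s \<in> S \<Longrightarrow> convergent (\<lambda>k. inner (w k) s)"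
    and "v \<in> closure S"
  shows "convergent (\<lambda>k. inner (w k) v)"
proof -
  have B: "B \<ge> 0" using bnd[of 0] norm_ge_zero order_trans by blast
  have "Cauchy (\<lambda>k. inner (w k) v)"
  proof (rule metric_CauchyI)
    fix e :: real assume "e > 0"
    define r where "r = e / (3 * (B + 1))"
    have "r > 0" using \<open>e > 0\<close> B by (simp add: r_def)
    then obtain s where s: "s \<in> S" "norm (v - s) < r"
      using \<open>v \<in> closure S\<close> unfolding closure_approachable by (auto simp: dist_norm norm_minus_commute)
    have "Cauchy (\<lambda>k. inner (w k) s)" using cnv[OF s(1)] Cauchy_convergent_iff by blast
    moreover have "e / 3 > 0" using \<open>e > 0\<close> by simp
    ultimately obtain M where M: "\<And>m n. m \<ge> M \<Longrightarrow> n \<ge> M \<Longrightarrow> \<bar>inner (w m) s - inner (w n) s\<bar> < e / 3"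
      unfolding Cauchy_def dist_real_def by blast
    have close: "\<bar>inner (w k) (v - s)\<bar> \<le> e / 3" for k
    proof -
      have "\<bar>inner (w k) (v - s)\<bar> \<le> B * r"
        using abs_inner_le_bound[OF bnd, of k "v - s"] s(2) B
        by (smt (verit) mult_left_mono)
      also have "\<dots> \<le> e / 3" using \<open>e > 0\<close> B by (simp add: r_def field_simps)
      finally show ?thesis .
    qed
    have "\<bar>inner (w m) v - inner (w n) v\<bar> < e" if "m \<ge> M" "n \<ge> M" for m n
      using M[OF that] close[of m] close[of n] unfolding inner_diff_right by linarith
    then show "\<exists>M. \<forall>m\<ge>M. \<forall>n\<ge>M. dist (inner (w m) v) (inner (w n) v) < e"
      unfolding dist_real_def by blast
  qed
  then show ?thesis using Cauchy_convergent_iff by blast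
qed

lemma weakly_convergent_if_inner_convergent:
  fixes w :: "nat \<Rightarrow> 'a::{real_inner,complete_space}"
  assumes bnd: "\<And>k. norm (w k) \<le> B" and cnv: "\<And>v. convergent (\<lambda>k. inner (w k) v)"
  shows "\<exists>q. weakly_converges_to w q"
proof -
  define L where "L v = lim (\<lambda>k. inner (w k) v)" for v
  have L: "(\<lambda>k. inner (w k) v) \<longlonglongrightarrow> L v" for v
    using cnv convergent_LIMSEQ_iff unfolding L_def by blast
  have "bounded_linear L"
  proof (rule bounded_linear_intro[where K = B])
    show "L (v + v') = L v + L v'" "L (c *\<^sub>R v) = c *\<^sub>R L v" for v v' c
      using L by (auto intro!: LIMSEQ_unique[OF L] tendsto_intros simp: inner_add_right)
    show "norm (L v) \<le> norm v * B" for v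
    proof -
      have "\<bar>L v\<bar> \<le> B * norm v"
        by (rule LIMSEQ_le_const2[OF tendsto_rabs[OF L]]) (use abs_inner_le_bound[OF bnd] in auto)
      then show ?thesis by (simp add: mult.commute)
    qed
  qed
  then obtain q where "\<And>v. L v = inner q v" using riesz_representation by blast
  then show ?thesis using L unfolding weakly_converges_to_def by auto
qed

lemma bounded_imp_weakly_convergent_subseq:
  fixes u :: "nat \<Rightarrow> 'a::{real_inner,complete_space}"
  assumes bnd: "\<And>n. norm (u n) \<le> B"
  shows "\<exists>r q. strict_mono r \<and> weakly_converges_to (u \<circ> r) q"
proof -
  obtain d where d: "strict_mono d" and cnv: "\<And>n. convergent (\<lambda>k. inner (u (d k)) (u n))"
    using inner_convergent_diagonal_subseq[of u B] bnd by blast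
  define M where "M = closure (span (range u))"
  have M: "subspace M" "closed M" unfolding M_def by (simp_all add: subspace_closure)
  have "convergent (\<lambda>k. inner (u (d k)) s)" if "s \<in> span (range u)" for s
    using inner_convergent_span[where w = "u \<circ> d" and S = "range u"] cnv that by auto
  then have cnv_M: "convergent (\<lambda>k. inner (u (d k)) m)" if "m \<in> M" for m
    using inner_convergent_closure[where w = "u \<circ> d" and S = "span (range u)" and B = B] bnd that
    unfolding M_def by auto
  have "convergent (\<lambda>k. inner (u (d k)) v)" for v
  proof -
    \<comment> \<open>the sequence lies in \<open>M\<close>, so it only sees the component of \<open>v\<close> in \<open>M\<close>\<close>
    have "inner (u (d k)) v = inner (u (d k)) (metric_proj M v)" for k
    proof -
      have "u (d k) \<in> M" unfolding M_def by (meson closure_subset rangeI span_base subsetD)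
      then have "inner (u (d k)) (v - metric_proj M v) = 0"
        using metric_proj_subspace_orthogonal[OF M] by (simp only: inner_commute)
      then show ?thesis by (simp add: inner_diff_right)
    qed
    moreover have "metric_proj M v \<in> M"
      using M subspace_0 subspace_imp_convex by (auto intro: metric_proj_in)
    ultimately show ?thesis using cnv_M by simp
  qed
  then obtain q where "weakly_converges_to (u \<circ> d) q"
    using weakly_convergent_if_inner_convergent[of "u \<circ> d" B] bnd by auto
  then show ?thesis using d by blast
qed

lemma weakly_converges_to_if_unique_cluster_point:
  fixes x :: "nat \<Rightarrow> 'a::{real_inner,complete_space}"
  assumes bnd: "\<And>k. norm (x k) \<le> B"
    and cluster: "\<And>s q. strict_mono s \<Longrightarrow> weakly_converges_to (x \<circ> s) q \<Longrightarrow> q = p"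
  shows "weakly_converges_to x p"
  unfolding weakly_converges_to_def
proof (rule allI, rule ccontr)
  fix y assume "\<not> (\<lambda>k. inner (x k) y) \<longlonglongrightarrow> inner p y"
  then obtain r where "r > 0" and far: "\<forall>M. \<exists>n\<ge>M. r \<le> \<bar>inner (x n) y - inner p y\<bar>"
    unfolding LIMSEQ_iff by (auto simp: not_less)
  define S where "S = {n. r \<le> \<bar>inner (x n) y - inner p y\<bar>}"
  have "infinite S" unfolding S_def infinite_nat_iff_unbounded_le using far by auto
  then have s1: "strict_mono (enumerate S)" "\<And>j. enumerate S j \<in> S"
    by (simp_all add: strict_mono_enumerate enumerate_in_set)
  obtain s2 q where s2: "strict_mono s2" and q: "weakly_converges_to (x \<circ> enumerate S \<circ> s2) q"
    using bounded_imp_weakly_convergent_subseq[of "x \<circ> enumerate S" B] bnd by auto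
  have "q = p" using cluster[of "enumerate S \<circ> s2"] q s1 s2 by (simp add: strict_mono_o o_assoc)
  have "(\<lambda>j. inner (x (enumerate S (s2 j))) y) \<longlonglongrightarrow> inner q y"
    using q unfolding weakly_converges_to_def comp_def by blast
  then have "(\<lambda>j. \<bar>inner (x (enumerate S (s2 j))) y - inner p y\<bar>) \<longlonglongrightarrow> \<bar>inner q y - inner p y\<bar>"
    by (intro tendsto_rabs tendsto_diff tendsto_const)
  then have "r \<le> \<bar>inner q y - inner p y\<bar>"
    using s1(2) unfolding S_def by (intro LIMSEQ_le_const) auto
  then show False using \<open>q = p\<close> \<open>r > 0\<close> by simp
qed

section \<open>Nonexpansive and strongly quasi-nonexpansive maps\<close>

lemma nonexpansive_norm_le:
  assumes "1-lipschitz_on UNIV G"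
  shows "norm (G a - G b) \<le> norm (a - b)"
  using lipschitz_onD[OF assms, of a b] by (simp add: dist_norm)

lemma convex_fixed_points_nonexpansive:
  fixes G :: "'a::real_inner \<Rightarrow> 'a"
  assumes G: "1-lipschitz_on UNIV G"
  shows "convex {q. G q = q}"
proof (rule convexI)
  fix z1 z2 and a b :: real
  assume z: "z1 \<in> {q. G q = q}" "z2 \<in> {q. G q = q}" and ab: "0 \<le> a" "0 \<le> b" "a + b = 1"
  define w where "w = a *\<^sub>R z1 + b *\<^sub>R z2"
  from z have "G z1 = z1" "G z2 = z2" by auto
  then have "norm (G w - z1) \<le> norm (w - z1)" "norm (G w - z2) \<le> norm (w - z2)"
    using nonexpansive_norm_le[OF G, of w] by metis+
  then have "a * (norm (G w - z1))\<^sup>2 + b * (norm (G w - z2))\<^sup>2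
      \<le> a * (norm (w - z1))\<^sup>2 + b * (norm (w - z2))\<^sup>2"
    using ab by (intro add_mono mult_left_mono power_mono) auto
  then have "(norm (G w - w))\<^sup>2 \<le> (norm (w - w))\<^sup>2"
    using convex_combination_norm_sq[OF ab(3), of "G w" z1 z2]
      convex_combination_norm_sq[OF ab(3), of w z1 z2]
    unfolding w_def by linarith
  then show "a *\<^sub>R z1 + b *\<^sub>R z2 \<in> {q. G q = q}" unfolding w_def by simp
qed

definition strongly_quasi_nonexpansive :: "real \<Rightarrow> 'a::real_inner set \<Rightarrow> ('a \<Rightarrow> 'a) \<Rightarrow> bool" where
  "strongly_quasi_nonexpansive \<epsilon> F G \<longleftrightarrow> 0 < \<epsilon> \<and>
     (\<forall>y. \<forall>z\<in>F. (norm (G y - z))\<^sup>2 \<le> (norm (y - z))\<^sup>2 - \<epsilon> * (norm (G y - y))\<^sup>2)"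

lemma strongly_quasi_nonexpansiveD:
  assumes "strongly_quasi_nonexpansive \<epsilon> F G"
  shows "0 < \<epsilon>"
    and "z \<in> F \<Longrightarrow> (norm (G y - z))\<^sup>2 \<le> (norm (y - z))\<^sup>2 - \<epsilon> * (norm (G y - y))\<^sup>2"
  using assms unfolding strongly_quasi_nonexpansive_def by auto

lemma strongly_quasi_nonexpansive_quasi:
  assumes "strongly_quasi_nonexpansive \<epsilon> F G" "z \<in> F"
  shows "norm (G y - z) \<le> norm (y - z)"
proof -
  have "0 \<le> \<epsilon> * (norm (G y - y))\<^sup>2"
    using strongly_quasi_nonexpansiveD(1)[OF assms(1)] by simp
  then have "(norm (G y - z))\<^sup>2 \<le> (norm (y - z))\<^sup>2"
    using strongly_quasi_nonexpansiveD(2)[OF assms, of y] by linarith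
  then show ?thesis by (rule power2_le_imp_le) simp
qed

lemma strongly_quasi_nonexpansive_fixed:
  assumes "strongly_quasi_nonexpansive \<epsilon> F G" "z \<in> F"
  shows "G z = z"
proof -
  have "(1 + \<epsilon>) * (norm (G z - z))\<^sup>2 \<le> 0"
    using strongly_quasi_nonexpansiveD(2)[OF assms, of z] by (simp add: algebra_simps)
  then show ?thesis
    using strongly_quasi_nonexpansiveD(1)[OF assms(1)] by (simp add: mult_le_0_iff)
qed

lemma strongly_quasi_nonexpansive_subset:
  "strongly_quasi_nonexpansive \<epsilon> F G \<Longrightarrow> F' \<subseteq> F \<Longrightarrow> strongly_quasi_nonexpansive \<epsilon> F' G"
  unfolding strongly_quasi_nonexpansive_def by blast

lemma strongly_quasi_nonexpansive_comp:
  assumes G1: "strongly_quasi_nonexpansive \<epsilon>1 F G1" and G2: "strongly_quasi_nonexpansive \<epsilon>2 F G2"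
  shows "strongly_quasi_nonexpansive (min \<epsilon>1 \<epsilon>2 / 2) F (G1 \<circ> G2)"
  unfolding strongly_quasi_nonexpansive_def
proof (intro conjI allI ballI)
  let ?\<epsilon> = "min \<epsilon>1 \<epsilon>2 / 2"
  have \<epsilon>: "0 < ?\<epsilon>" "2 * ?\<epsilon> \<le> \<epsilon>1" "2 * ?\<epsilon> \<le> \<epsilon>2"
    using strongly_quasi_nonexpansiveD(1)[OF G1] strongly_quasi_nonexpansiveD(1)[OF G2] by auto
  then show "0 < ?\<epsilon>" by simp
  fix y z assume "z \<in> F"
  define t where "t = G2 y"
  have descent: "(norm (G1 t - z))\<^sup>2
      \<le> (norm (y - z))\<^sup>2 - (\<epsilon>1 * (norm (G1 t - t))\<^sup>2 + \<epsilon>2 * (norm (t - y))\<^sup>2)"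
    using strongly_quasi_nonexpansiveD(2)[OF G1 \<open>z \<in> F\<close>, of t]
      strongly_quasi_nonexpansiveD(2)[OF G2 \<open>z \<in> F\<close>, of y]
    unfolding t_def by linarith
  have "?\<epsilon> * (norm (G1 t - y))\<^sup>2 \<le> ?\<epsilon> * (2 * (norm (G1 t - t))\<^sup>2 + 2 * (norm (t - y))\<^sup>2)"
    using norm_add_sq_le[of "G1 t - t" "t - y"] \<epsilon>(1) by (intro mult_left_mono) simp_all
  also have "\<dots> = (2 * ?\<epsilon>) * (norm (G1 t - t))\<^sup>2 + (2 * ?\<epsilon>) * (norm (t - y))\<^sup>2"
    by (simp add: algebra_simps)
  also have "\<dots> \<le> \<epsilon>1 * (norm (G1 t - t))\<^sup>2 + \<epsilon>2 * (norm (t - y))\<^sup>2"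
    using \<epsilon> by (intro add_mono mult_right_mono) auto
  finally show "(norm ((G1 \<circ> G2) y - z))\<^sup>2 \<le> (norm (y - z))\<^sup>2 - ?\<epsilon> * (norm ((G1 \<circ> G2) y - y))\<^sup>2"
    using descent unfolding t_def by simp
qed

lemma strongly_quasi_nonexpansive_comp_fixed:
  assumes G1: "strongly_quasi_nonexpansive \<epsilon>1 F G1" and G2: "strongly_quasi_nonexpansive \<epsilon>2 F G2"
    and "F \<noteq> {}" and q: "G1 (G2 q) = q"
  shows "G2 q = q"
proof -
  obtain z where "z \<in> F" using \<open>F \<noteq> {}\<close> by blast
  have "(norm (q - z))\<^sup>2 \<le> (norm (G2 q - z))\<^sup>2"
    using strongly_quasi_nonexpansive_quasi[OF G1 \<open>z \<in> F\<close>, of "G2 q"] q by (simp add: power_mono)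
  then have "\<epsilon>2 * (norm (G2 q - q))\<^sup>2 \<le> 0"
    using strongly_quasi_nonexpansiveD(2)[OF G2 \<open>z \<in> F\<close>, of q] by linarith
  then show ?thesis using strongly_quasi_nonexpansiveD(1)[OF G2] by (simp add: mult_le_0_iff)
qed

lemma nonexpansive_compose_upto:
  assumes "\<And>i. i \<in> {1..n} \<Longrightarrow> 1-lipschitz_on UNIV (T i)"
  shows "1-lipschitz_on UNIV (compose_upto T n)"
  using assms
proof (induction n)
  case 0
  then show ?case using lipschitz_on_id by (simp add: id_def)
next
  case (Suc n)
  have "1-lipschitz_on UNIV (compose_upto T n)" using Suc by simp
  then have "1-lipschitz_on (range (T (Suc n))) (compose_upto T n)"
    by (rule lipschitz_on_subset) simp
  then show ?case using lipschitz_on_compose[OF Suc.prems[of "Suc n"]] by simp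
qed

lemma strongly_quasi_nonexpansive_compose_upto:
  assumes "\<And>i. i \<in> {1..n} \<Longrightarrow> \<exists>\<epsilon>. strongly_quasi_nonexpansive \<epsilon> F (T i)"
  shows "\<exists>\<epsilon>. strongly_quasi_nonexpansive \<epsilon> F (compose_upto T n)"
  using assms
proof (induction n)
  case 0
  have "strongly_quasi_nonexpansive 1 F (\<lambda>y. y)" unfolding strongly_quasi_nonexpansive_def by simp
  then show ?case by auto
next
  case (Suc n)
  then obtain \<epsilon>1 \<epsilon>2 where "strongly_quasi_nonexpansive \<epsilon>1 F (compose_upto T n)"
    "strongly_quasi_nonexpansive \<epsilon>2 F (T (Suc n))"
    by force
  then have "strongly_quasi_nonexpansive (min \<epsilon>1 \<epsilon>2 / 2) F (compose_upto T (Suc n))"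
    by (simp add: strongly_quasi_nonexpansive_comp)
  then show ?case by blast
qed

lemma fixed_point_compose_upto_imp_fixed_point:
  assumes "F \<noteq> {}" and T: "\<And>i. i \<in> {1..n} \<Longrightarrow> \<exists>\<epsilon>. strongly_quasi_nonexpansive \<epsilon> F (T i)"
    and "compose_upto T n q = q" "i \<in> {1..n}"
  shows "T i q = q"
  using assms(2-)
proof (induction n)
  case 0
  then show ?case by simp
next
  case (Suc n)
  obtain \<epsilon> where "strongly_quasi_nonexpansive \<epsilon> F (compose_upto T n)"
    using strongly_quasi_nonexpansive_compose_upto[of n F T] Suc.prems(1) by auto
  moreover obtain \<epsilon>' where "strongly_quasi_nonexpansive \<epsilon>' F (T (Suc n))"
    using Suc.prems(1) by auto
  moreover have "compose_upto T n (T (Suc n) q) = q" using Suc.prems(2) by simp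
  ultimately have "T (Suc n) q = q"
    using strongly_quasi_nonexpansive_comp_fixed \<open>F \<noteq> {}\<close> by blast
  moreover have "compose_upto T n q = q" using Suc.prems(2) calculation by simp
  ultimately show ?case using Suc by (cases "i = Suc n") auto
qed

lemma fixed_points_compose_upto:
  assumes "F \<noteq> {}" and T: "\<And>i. i \<in> {1..n} \<Longrightarrow> \<exists>\<epsilon>. strongly_quasi_nonexpansive \<epsilon> F (T i)"
    and F: "F = (\<Inter>i\<in>{1..n}. {q. T i q = q})"
  shows "{q. compose_upto T n q = q} = F"
proof
  show "{q. compose_upto T n q = q} \<subseteq> F"
    using fixed_point_compose_upto_imp_fixed_point[OF \<open>F \<noteq> {}\<close>, of n T] T F by blast
  obtain \<epsilon> where "strongly_quasi_nonexpansive \<epsilon> F (compose_upto T n)"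
    using strongly_quasi_nonexpansive_compose_upto[of n F T] T by blast
  then show "F \<subseteq> {q. compose_upto T n q = q}" using strongly_quasi_nonexpansive_fixed by blast
qed

section \<open>Fejer monotone iterations\<close>

definition fejer_monotone :: "'a::real_normed_vector set \<Rightarrow> (nat \<Rightarrow> 'a) \<Rightarrow> bool" where
  "fejer_monotone F x \<longleftrightarrow> (\<forall>z\<in>F. decseq (\<lambda>k. norm (x k - z)))"

lemma fejer_monotone_le:
  "fejer_monotone F x \<Longrightarrow> z \<in> F \<Longrightarrow> k \<le> m \<Longrightarrow> norm (x m - z) \<le> norm (x k - z)"
  unfolding fejer_monotone_def by (metis decseqD)

lemma fejer_monotone_bounded:
  assumes "fejer_monotone F x" "z \<in> F"
  shows "norm (x k) \<le> norm (x 0 - z) + norm z"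
  using fejer_monotone_le[OF assms, of 0 k] norm_triangle_sub[of "x k" z] by simp

lemma iterates_fejer_monotone:
  assumes "strongly_quasi_nonexpansive \<epsilon> F G" "\<And>k. x (Suc k) = G (x k)"
  shows "fejer_monotone F x"
  unfolding fejer_monotone_def
  using strongly_quasi_nonexpansive_quasi[OF assms(1)] assms(2) by (auto intro: decseq_SucI)

lemma fejer_monotone_metric_proj_convergent:
  fixes x :: "nat \<Rightarrow> 'a::{real_inner,complete_space}"
  assumes F: "F \<noteq> {}" "closed F" "convex F" and fejer: "fejer_monotone F x"
  shows "\<exists>p\<in>F. (\<lambda>k. metric_proj F (x k)) \<longlonglongrightarrow> p"
proof -
  define P where "P k = metric_proj F (x k)" for k
  define e where "e k = (norm (x k - P k))\<^sup>2" for k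
  have PF: "P k \<in> F" for k unfolding P_def by (rule metric_proj_in[OF F])
  have key: "(norm (P m - P k))\<^sup>2 \<le> e k - e m" if "k \<le> m" for k m
  proof -
    have "(norm (x m - P k))\<^sup>2 = e m - 2 * inner (x m - P m) (P k - P m) + (norm (P k - P m))\<^sup>2"
      using norm_diff_sq[of "x m - P m" "P k - P m"] by (simp add: e_def)
    moreover have "inner (x m - P m) (P k - P m) \<le> 0"
      unfolding P_def by (rule metric_proj_variational[OF F metric_proj_in[OF F]])
    moreover have "(norm (x m - P k))\<^sup>2 \<le> e k"
      unfolding e_def using fejer_monotone_le[OF fejer PF that] by (simp add: power_mono)
    ultimately show ?thesis by (simp add: norm_minus_commute)
  qed
  have "decseq e"
  proof (rule decseq_SucI)
    fix k
    have "norm (x (Suc k) - P (Suc k)) \<le> norm (x (Suc k) - P k)"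
      unfolding P_def by (rule metric_proj_le[OF F PF[unfolded P_def]])
    also have "\<dots> \<le> norm (x k - P k)" using fejer_monotone_le[OF fejer PF] by simp
    finally show "e (Suc k) \<le> e k" unfolding e_def by (simp add: power_mono)
  qed
  moreover have "\<forall>k. 0 \<le> e k" by (simp add: e_def)
  ultimately obtain L where L: "e \<longlonglongrightarrow> L" using decseq_convergent by blast
  have "(dist (P m) (P n))\<^sup>2 \<le> \<bar>e m - L\<bar> + \<bar>e n - L\<bar>" for m n
    using key[of m n] key[of n m] by (cases "m \<le> n") (auto simp: dist_norm norm_minus_commute)
  moreover have "(\<lambda>k. \<bar>e k - L\<bar>) \<longlonglongrightarrow> 0"
    using tendsto_rabs_zero[OF LIM_zero[OF L]] .
  ultimately have "Cauchy P" by (rule Cauchy_if_dist_sq_le)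
  then obtain p where "P \<longlonglongrightarrow> p" using Cauchy_convergent_iff convergent_def by blast
  moreover have "p \<in> F" using F(2) PF calculation closed_sequential_limits by blast
  ultimately show ?thesis unfolding P_def by blast
qed

lemma iterates_asymptotically_regular:
  assumes G: "strongly_quasi_nonexpansive \<epsilon> F G" and "F \<noteq> {}" and x: "\<And>k. x (Suc k) = G (x k)"
  shows "(\<lambda>k. G (x k) - x k) \<longlonglongrightarrow> 0"
proof -
  obtain z where "z \<in> F" using \<open>F \<noteq> {}\<close> by blast
  define d where "d k = (norm (x k - z))\<^sup>2" for k
  have "decseq d"
    using fejer_monotone_le[OF iterates_fejer_monotone[of \<epsilon> F G x, OF G x] \<open>z \<in> F\<close>]
    unfolding d_def by (intro decseq_SucI power_mono) auto
  moreover have "\<forall>k. 0 \<le> d k" by (simp add: d_def)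
  ultimately obtain L where L: "d \<longlonglongrightarrow> L" using decseq_convergent by blast
  have "(\<lambda>k. d k - d (Suc k)) \<longlonglongrightarrow> L - L" by (intro tendsto_diff L LIMSEQ_Suc)
  then have lim: "(\<lambda>k. (d k - d (Suc k)) / \<epsilon>) \<longlonglongrightarrow> 0" by (simp add: tendsto_divide_zero)
  have "(norm (G (x k) - x k))\<^sup>2 \<le> (d k - d (Suc k)) / \<epsilon>" for k
    using strongly_quasi_nonexpansiveD[OF G] strongly_quasi_nonexpansiveD(2)[OF G \<open>z \<in> F\<close>, of "x k"]
    unfolding d_def x by (simp add: field_simps)
  then have "(\<lambda>k. (norm (G (x k) - x k))\<^sup>2) \<longlonglongrightarrow> 0"
    by (intro tendsto_sandwich[OF _ _ tendsto_const lim] always_eventually allI) auto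
  then have "(\<lambda>k. sqrt ((norm (G (x k) - x k))\<^sup>2)) \<longlonglongrightarrow> sqrt 0" by (rule tendsto_real_sqrt)
  then show ?thesis by (simp add: tendsto_norm_zero_iff)
qed

lemma nonexpansive_demiclosed:
  fixes G :: "'a::real_inner \<Rightarrow> 'a"
  assumes G: "1-lipschitz_on UNIV G" and weak: "weakly_converges_to u q"
    and bnd: "\<And>j. norm (u j) \<le> B" and reg: "(\<lambda>j. G (u j) - u j) \<longlonglongrightarrow> 0"
  shows "G q = q"
proof -
  define a where "a j = norm (u j - q)" for j
  define e where "e j = norm (u j - G (u j))" for j
  have e: "e \<longlonglongrightarrow> 0"
    using tendsto_norm_zero[OF reg] unfolding e_def by (simp add: norm_minus_commute)
  have bound: "(norm (q - G q))\<^sup>2 \<le> 2 * (a j * e j) + (e j)\<^sup>2 - 2 * inner (u j - q) (q - G q)" for j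
  proof -
    have "norm (u j - G q) \<le> norm (u j - G (u j)) + norm (G (u j) - G q)"
      using norm_triangle_ineq[of "u j - G (u j)" "G (u j) - G q"] by simp
    then have "norm (u j - G q) \<le> e j + a j"
      using nonexpansive_norm_le[OF G, of "u j" q] unfolding a_def e_def by simp
    then have "(norm (u j - G q))\<^sup>2 \<le> (e j + a j)\<^sup>2" by (simp add: power_mono)
    moreover have "(norm (u j - G q))\<^sup>2 = (a j)\<^sup>2 + 2 * inner (u j - q) (q - G q) + (norm (q - G q))\<^sup>2"
      using norm_add_sq[of "u j - q" "q - G q"] unfolding a_def by simp
    ultimately show ?thesis by (simp add: power2_sum algebra_simps)
  qed
  have "norm (a j) \<le> B + norm q" for j
    unfolding a_def using bnd[of j] norm_triangle_ineq4[of "u j" q] by simp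
  then have ae: "(\<lambda>j. a j * e j) \<longlonglongrightarrow> 0"
    using bounded_inner_null[of a "B + norm q" e] e by simp
  have "(\<lambda>j. inner (u j - q) (q - G q)) \<longlonglongrightarrow> inner q (q - G q) - inner q (q - G q)"
    using weak unfolding weakly_converges_to_def inner_diff_left by (intro tendsto_diff) auto
  then have "(\<lambda>j. 2 * (a j * e j) + (e j)\<^sup>2 - 2 * inner (u j - q) (q - G q))
      \<longlonglongrightarrow> 2 * 0 + 0\<^sup>2 - 2 * (inner q (q - G q) - inner q (q - G q))"
    by (intro tendsto_diff tendsto_add tendsto_mult_left tendsto_power ae e)
  then have "(\<lambda>j. 2 * (a j * e j) + (e j)\<^sup>2 - 2 * inner (u j - q) (q - G q)) \<longlonglongrightarrow> 0"
    by simp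
  then have "(norm (q - G q))\<^sup>2 \<le> 0" using bound by (intro LIMSEQ_le_const) auto
  then show ?thesis by simp
qed

lemma weak_cluster_point_eq_metric_proj_limit:
  fixes u :: "nat \<Rightarrow> 'a::{real_inner,complete_space}"
  assumes F: "F \<noteq> {}" "closed F" "convex F" and weak: "weakly_converges_to u q" and "q \<in> F"
    and bnd: "\<And>j. norm (u j) \<le> B" and proj: "(\<lambda>j. metric_proj F (u j)) \<longlonglongrightarrow> p"
  shows "q = p"
proof -
  have lim: "(\<lambda>j. inner (u j) (q - metric_proj F (u j)) - inner (metric_proj F (u j)) (q - metric_proj F (u j)))
      \<longlonglongrightarrow> inner q (q - p) - inner p (q - p)"
    by (intro tendsto_diff weakly_converges_to_inner_tendsto[OF weak bnd] tendsto_inner proj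
        tendsto_const)
  have "inner (u j) (q - metric_proj F (u j)) - inner (metric_proj F (u j)) (q - metric_proj F (u j)) \<le> 0" for j
    using metric_proj_variational[OF F \<open>q \<in> F\<close>, of "u j"] by (simp add: inner_diff_left)
  then have "inner q (q - p) - inner p (q - p) \<le> 0" by (intro LIMSEQ_le_const2[OF lim]) auto
  then have "inner (q - p) (q - p) \<le> 0" by (simp add: inner_diff_left)
  then show ?thesis by (metis antisym inner_ge_zero inner_eq_zero_iff right_minus_eq)
qed

theorem nonexpansive_iterates_weakly_converge:
  fixes G :: "'a::{real_inner,complete_space} \<Rightarrow> 'a"
  assumes G: "1-lipschitz_on UNIV G" and sqne: "strongly_quasi_nonexpansive \<epsilon> {q. G q = q} G"
    and ne: "{q. G q = q} \<noteq> {}" and x: "\<And>k. x (Suc k) = G (x k)"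
  shows "\<exists>p\<in>{q. G q = q}. weakly_converges_to x p \<and> (\<lambda>k. metric_proj {q. G q = q} (x k)) \<longlonglongrightarrow> p"
proof -
  let ?F = "{q. G q = q}"
  have F: "?F \<noteq> {}" "closed ?F" "convex ?F"
    using ne lipschitz_on_continuous_on[OF G] convex_fixed_points_nonexpansive[OF G]
    by (auto intro: closed_Collect_eq continuous_on_id)
  have fejer: "fejer_monotone ?F x" by (rule iterates_fejer_monotone[of \<epsilon> _ G x, OF sqne x])
  obtain z where "z \<in> ?F" using ne by blast
  note bnd = fejer_monotone_bounded[OF fejer this]
  have reg: "(\<lambda>k. G (x k) - x k) \<longlonglongrightarrow> 0" by (rule iterates_asymptotically_regular[of \<epsilon> _ G x, OF sqne ne x])
  obtain p where "p \<in> ?F" and proj: "(\<lambda>k. metric_proj ?F (x k)) \<longlonglongrightarrow> p"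
    using fejer_monotone_metric_proj_convergent[OF F fejer] by blast
  have cluster: "q = p" if s: "strict_mono s" and weak: "weakly_converges_to (x \<circ> s) q" for s q
  proof -
    have bnd_s: "norm ((x \<circ> s) j) \<le> norm (x 0 - z) + norm z" for j using bnd by simp
    have "(\<lambda>j. G ((x \<circ> s) j) - (x \<circ> s) j) \<longlonglongrightarrow> 0"
      using LIMSEQ_subseq_LIMSEQ[OF reg s] by (simp add: o_def)
    then have "q \<in> ?F" using nonexpansive_demiclosed[OF G weak bnd_s] by simp
    moreover have "(\<lambda>j. metric_proj ?F ((x \<circ> s) j)) \<longlonglongrightarrow> p"
      using LIMSEQ_subseq_LIMSEQ[OF proj s] by (simp add: o_def)
    ultimately show ?thesis using weak_cluster_point_eq_metric_proj_limit[OF F weak _ bnd_s] by blast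
  qed
  have "weakly_converges_to x p"
    by (rule weakly_converges_to_if_unique_cluster_point[where B = "norm (x 0 - z) + norm z"])
      (use bnd cluster in auto)
  then show ?thesis using \<open>p \<in> ?F\<close> proj by blast
qed

section \<open>The forward-backward operator\<close>

definition forward_backward :: "'a::real_inner set \<Rightarrow> ('a \<Rightarrow> 'a) \<Rightarrow> real \<Rightarrow> 'a \<Rightarrow> 'a" where
  "forward_backward D h lam y = metric_proj D (y - lam *\<^sub>R h y)"

lemma forward_backward_firm:
  fixes h :: "'a::{real_inner,complete_space} \<Rightarrow> 'a"
  assumes D: "D \<noteq> {}" "closed D" "convex D" and ism: "inv_strongly_monotone a h" and "0 \<le> lam"
  defines "T \<equiv> forward_backward D h lam"
  shows "(norm (T y - T z))\<^sup>2 + (norm ((y - lam *\<^sub>R h y - T y) - (z - lam *\<^sub>R h z - T z)))\<^sup>2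
    \<le> (norm (y - z))\<^sup>2 - lam * (2 * a - lam) * (norm (h y - h z))\<^sup>2"
proof -
  have "a * (norm (h y - h z))\<^sup>2 \<le> inner (y - z) (h y - h z)"
    using ism unfolding inv_strongly_monotone_def by (simp add: inner_commute)
  then have "lam * (a * (norm (h y - h z))\<^sup>2) \<le> lam * inner (y - z) (h y - h z)"
    using \<open>0 \<le> lam\<close> by (rule mult_left_mono)
  moreover have "(y - lam *\<^sub>R h y) - (z - lam *\<^sub>R h z) = (y - z) - lam *\<^sub>R (h y - h z)"
    by (simp add: algebra_simps)
  then have "(norm ((y - lam *\<^sub>R h y) - (z - lam *\<^sub>R h z)))\<^sup>2
      = (norm (y - z))\<^sup>2 - 2 * lam * inner (y - z) (h y - h z) + lam\<^sup>2 * (norm (h y - h z))\<^sup>2"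
    by (simp only: norm_diff_sq[of "y - z" "lam *\<^sub>R (h y - h z)"]) (simp add: power_mult_distrib)
  ultimately have "(norm ((y - lam *\<^sub>R h y) - (z - lam *\<^sub>R h z)))\<^sup>2
      \<le> (norm (y - z))\<^sup>2 - lam * (2 * a - lam) * (norm (h y - h z))\<^sup>2"
    by (simp add: algebra_simps power2_eq_square)
  then show ?thesis
    using metric_proj_firmly_nonexpansive[OF D, of "y - lam *\<^sub>R h y" "z - lam *\<^sub>R h z"]
    unfolding T_def forward_backward_def by linarith
qed

lemma forward_backward_nonexpansive:
  fixes h :: "'a::{real_inner,complete_space} \<Rightarrow> 'a"
  assumes D: "D \<noteq> {}" "closed D" "convex D" and ism: "inv_strongly_monotone a h"
    and lam: "0 \<le> lam" "lam \<le> 2 * a"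
  shows "1-lipschitz_on UNIV (forward_backward D h lam)"
proof (rule lipschitz_onI)
  fix y z :: 'a
  let ?T = "forward_backward D h lam"
  have "(norm (?T y - ?T z))\<^sup>2
      \<le> (norm (?T y - ?T z))\<^sup>2 + (norm ((y - lam *\<^sub>R h y - ?T y) - (z - lam *\<^sub>R h z - ?T z)))\<^sup>2"
    by simp
  also have "\<dots> \<le> (norm (y - z))\<^sup>2 - lam * (2 * a - lam) * (norm (h y - h z))\<^sup>2"
    by (rule forward_backward_firm[OF D ism lam(1)])
  also have "\<dots> \<le> (norm (y - z))\<^sup>2" using lam by simp
  finally have "norm (?T y - ?T z) \<le> norm (y - z)" by (rule power2_le_imp_le) simp
  then show "dist (?T y) (?T z) \<le> 1 * dist y z" by (simp add: dist_norm)
qed simp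

lemma forward_backward_fixed_iff:
  fixes h :: "'a::{real_inner,complete_space} \<Rightarrow> 'a"
  assumes D: "D \<noteq> {}" "closed D" "convex D" and "0 < lam"
  shows "forward_backward D h lam z = z \<longleftrightarrow> z \<in> SOL D h"
proof
  assume fixed: "forward_backward D h lam z = z"
  then have "z \<in> D" using metric_proj_in[OF D] unfolding forward_backward_def by metis
  moreover have "0 \<le> inner (h z) (y - z)" if "y \<in> D" for y
  proof -
    have "inner ((z - lam *\<^sub>R h z) - z) (y - z) \<le> 0"
      using metric_proj_variational[OF D that, of "z - lam *\<^sub>R h z"] fixed
      unfolding forward_backward_def by simp
    then show ?thesis using \<open>0 < lam\<close> by (simp add: zero_le_mult_iff)
  qed
  ultimately show "z \<in> SOL D h" unfolding SOL_def by blast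
next
  assume "z \<in> SOL D h"
  then have "z \<in> D" and vi: "\<And>y. y \<in> D \<Longrightarrow> 0 \<le> inner (h z) (y - z)" unfolding SOL_def by auto
  have "inner ((z - lam *\<^sub>R h z) - z) (y - z) \<le> 0" if "y \<in> D" for y
    using vi[OF that] \<open>0 < lam\<close> by simp
  then show "forward_backward D h lam z = z"
    unfolding forward_backward_def by (rule metric_proj_eqI[OF D \<open>z \<in> D\<close>])
qed

lemma forward_backward_strongly_quasi_nonexpansive:
  fixes h :: "'a::{real_inner,complete_space} \<Rightarrow> 'a"
  assumes D: "D \<noteq> {}" "closed D" "convex D" and ism: "inv_strongly_monotone a h"
    and lam: "0 < lam" "lam < 2 * a"
  shows "strongly_quasi_nonexpansive (min 1 ((2 * a - lam) / lam) / 2) (SOL D h) (forward_backward D h lam)"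
  unfolding strongly_quasi_nonexpansive_def
proof (intro conjI allI ballI)
  let ?T = "forward_backward D h lam" and ?\<epsilon> = "min 1 ((2 * a - lam) / lam) / 2"
  have \<epsilon>: "0 < ?\<epsilon>" "2 * ?\<epsilon> \<le> 1" "2 * ?\<epsilon> * lam\<^sup>2 \<le> lam * (2 * a - lam)"
    using lam by (auto simp: min_def field_simps power2_eq_square)
  then show "0 < ?\<epsilon>" by simp
  fix y z assume "z \<in> SOL D h"
  then have Tz: "?T z = z" using forward_backward_fixed_iff[OF D lam(1)] by blast
  define w where "w = (y - ?T y) - lam *\<^sub>R (h y - h z)"
  define g where "g = norm (h y - h z)"
  have firm: "(norm (?T y - z))\<^sup>2 + (norm w)\<^sup>2 \<le> (norm (y - z))\<^sup>2 - lam * (2 * a - lam) * g\<^sup>2"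
    using forward_backward_firm[OF D ism less_imp_le[OF lam(1)], of y z] Tz
    unfolding w_def g_def by (simp add: algebra_simps)
  have "(norm (y - ?T y))\<^sup>2 \<le> 2 * (norm w)\<^sup>2 + 2 * (lam\<^sup>2 * g\<^sup>2)"
    using norm_add_sq_le[of w "lam *\<^sub>R (h y - h z)"] lam(1)
    unfolding w_def g_def by (simp add: power_mult_distrib)
  then have "?\<epsilon> * (norm (y - ?T y))\<^sup>2 \<le> ?\<epsilon> * (2 * (norm w)\<^sup>2 + 2 * (lam\<^sup>2 * g\<^sup>2))"
    using \<epsilon>(1) by (intro mult_left_mono) auto
  also have "\<dots> = (2 * ?\<epsilon>) * (norm w)\<^sup>2 + (2 * ?\<epsilon> * lam\<^sup>2) * g\<^sup>2"
    by (simp add: algebra_simps)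
  also have "\<dots> \<le> 1 * (norm w)\<^sup>2 + lam * (2 * a - lam) * g\<^sup>2"
    using \<epsilon> by (intro add_mono mult_right_mono) auto
  finally show "(norm (?T y - z))\<^sup>2 \<le> (norm (y - z))\<^sup>2 - ?\<epsilon> * (norm (?T y - y))\<^sup>2"
    using firm by (simp add: norm_minus_commute)
qed

theorem theorem4p2:
  fixes N :: nat
    and f :: "nat \<Rightarrow> 'a::{real_inner, complete_space} \<Rightarrow> 'a"
    and C :: "nat \<Rightarrow> 'a set"
    and \<alpha>i :: "nat \<Rightarrow> real"
    and lam :: real
    and x0 :: 'a
    and x :: "nat \<Rightarrow> 'a"
  assumes N: "N \<ge> 1"
    and ism: "\<And>i. i \<in> {1..N} \<Longrightarrow> \<alpha>i i > 0 \<and> inv_strongly_monotone (\<alpha>i i) (f i)"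
    and C_ne: "\<And>i. i \<in> {1..N} \<Longrightarrow> C i \<noteq> {}"
    and C_closed: "\<And>i. i \<in> {1..N} \<Longrightarrow> closed (C i)"
    and C_convex: "\<And>i. i \<in> {1..N} \<Longrightarrow> convex (C i)"
    and C_inter: "(\<Inter>i\<in>{1..N}. C i) \<noteq> {}"
    and Psi_ne: "(\<Inter>i\<in>{1..N}. SOL (C i) (f i)) \<noteq> {}"
    and lam: "0 < lam" "lam < 2 * Min (\<alpha>i ` {1..N})"
    and x_0: "x 0 = x0"
    and x_step: "\<And>k. x (Suc k) =
        compose_upto (\<lambda>i y. metric_proj (C i) (y - lam *\<^sub>R f i y)) N (x k)"
  shows "\<exists>xs \<in> (\<Inter>i\<in>{1..N}. SOL (C i) (f i)).
           weakly_converges_to x xs \<and>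
           (\<lambda>k. metric_proj (\<Inter>i\<in>{1..N}. SOL (C i) (f i)) (x k)) \<longlonglongrightarrow> xs"
proof -
  \<comment> \<open>\<open>C_inter\<close> follows from \<open>Psi_ne\<close>.\<close>
  let ?\<Psi> = "\<Inter>i\<in>{1..N}. SOL (C i) (f i)"
  let ?T = "\<lambda>i. forward_backward (C i) (f i) lam"
  let ?G = "compose_upto ?T N"
  have C: "C i \<noteq> {}" "closed (C i)" "convex (C i)" if "i \<in> {1..N}" for i
    using C_ne C_closed C_convex that by auto
  have lam_i: "lam < 2 * \<alpha>i i" if "i \<in> {1..N}" for i
    using lam(2) Min_le[OF finite_imageI[OF finite_atLeastAtMost] imageI[OF that, of \<alpha>i]] by linarith
  have T_sqne: "\<exists>\<epsilon>. strongly_quasi_nonexpansive \<epsilon> ?\<Psi> (?T i)" if i: "i \<in> {1..N}" for i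
  proof -
    have "?\<Psi> \<subseteq> SOL (C i) (f i)" using i by blast
    then show ?thesis
      using forward_backward_strongly_quasi_nonexpansive[OF C[OF i] conjunct2[OF ism[OF i]] lam(1)
          lam_i[OF i]] strongly_quasi_nonexpansive_subset by blast
  qed
  have "1-lipschitz_on UNIV ?G"
    using forward_backward_nonexpansive[OF C _ less_imp_le[OF lam(1)] less_imp_le[OF lam_i]] ism
    by (intro nonexpansive_compose_upto) auto
  moreover obtain \<epsilon> where "strongly_quasi_nonexpansive \<epsilon> ?\<Psi> ?G"
    using strongly_quasi_nonexpansive_compose_upto[of N ?\<Psi> ?T] T_sqne by blast
  moreover have "{q. ?G q = q} = ?\<Psi>"
    using forward_backward_fixed_iff[OF C lam(1)]
    by (intro fixed_points_compose_upto[OF Psi_ne T_sqne]) auto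
  moreover have "x (Suc k) = ?G (x k)" for k
    using x_step by (simp add: forward_backward_def[abs_def])
  ultimately show ?thesis using nonexpansive_iterates_weakly_converge[of ?G \<epsilon> x] Psi_ne by auto
qed

end
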